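(* Let $\Omega\subset\mathbb{R}^n$ be a bounded open convex set with smooth boundary, let $\Lambda>0$, and let $u$ be a nonconstant continuous viscosity solution of $(N_\Lambda)$. Then $u$ changes sign in $\Omega$, i.e. both sets $\{x\in\Omega:u(x)>0\}$ and $\{x\in\Omega:u(x)<0\}$ are nonempty.
   Context: $\nu$ denotes the outer unit normal to $\partial\Omega$, and $\Delta_\infty u=\sum_{i,j=1}^n u_{x_i}u_{x_ix_j}u_{x_j}$. For $\Lambda\ge 0$, problem $(N_\Lambda)$ is $$\min\{|\nabla u|-\Lambda|u|,-\Delta_\infty u\}=0 \text{ in }\{u>0\}\cap\Omega,\quad \max\{\Lambda|u|-|\nabla u|,-\Delta_\infty u\}=0 \text{ in }\{u<0\}\cap\Omega,\quad -\Delta_\infty u=0 \text{ in }\{u=0\}\cap\Omega,\quad \tfrac{\partial u}{\partial\nu}=0 \text{ on }\partial\Omega,$$ understood in the viscosity sense as follows. For $s\in\mathbb{R}$, $\xi\in\mathbb{R}^n$, $X$ a symmetric $n\times n$ matrix, let $F(s,\xi,X)=\min\{|\xi|-\Lambda|s|,-\langle X\xi,\xi\rangle\}$, $G(s,\xi,X)=\max\{\Lambda|s|-|\xi|,-\langle X\xi,\xi\rangle\}$, $H(X)=-\langle X\xi,\xi\rangle$ (evaluated at the same $\xi$). For a function $u$ and point $x_0$, let $E$ denote $F$ if $u(x_0)>0$, $G$ if $u(x_0)<0$, $H$ if $u(x_0)=0$. An upper semicontinuous $u$ on $\overline\Omega$ is a viscosity subsolution if: for every $x_0\in\Omega$ and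 $\phi\in C^2(\Omega)$ with $\phi(x_0)=u(x_0)$ and $u(x)<\phi(x)$ for $x\neq x_0$, one has $E(\phi(x_0),\nabla\phi(x_0),\nabla^2\phi(x_0))\le 0$; and for every $x_0\in\partial\Omega$ and $\phi\in C^2(\overline\Omega)$ with the same touching property, $\min\{E(\phi(x_0),\nabla\phi(x_0),\nabla^2\phi(x_0)),\frac{\partial\phi}{\partial\nu}(x_0)\}\le 0$. A lower semicontinuous $u$ is a viscosity supersolution if the same holds with $u(x)>\phi(x)$ for $x\ne x_0$, with "$E\le 0$" replaced by "$E\ge 0$" at interior points and with $\max\{E(\phi(x_0),\nabla\phi(x_0),\nabla^2\phi(x_0)),\frac{\partial\phi}{\partial\nu}(x_0)\}\ge 0$ at boundary points. A continuous $u$ is a viscosity solution if it is both a sub- and a supersolution. *)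

theory Defs
  imports "HOL-Analysis.Analysis"
begin

fun Ck :: "nat \<Rightarrow> 'a set \<Rightarrow> ('a::euclidean_space \<Rightarrow> real) \<Rightarrow> bool" where
  "Ck 0 U f = continuous_on U f"
| "Ck (Suc k) U f =
     (f differentiable_on U \<and> (\<forall>b\<in>Basis. Ck k U (\<lambda>x. frechet_derivative f (at x) b)))"

definition smooth_on :: "'a set \<Rightarrow> ('a::euclidean_space \<Rightarrow> real) \<Rightarrow> bool" where
  "smooth_on U f \<longleftrightarrow> (\<forall>k. Ck k U f)"

definition grad :: "('a::euclidean_space \<Rightarrow> real) \<Rightarrow> 'a \<Rightarrow> 'a" where
  "grad f x = (\<Sum>b\<in>Basis. frechet_derivative f (at x) b *\<^sub>R b)"

definition hess_form :: "('a::euclidean_space \<Rightarrow> real) \<Rightarrow> 'a \<Rightarrow> 'a \<Rightarrow> real" where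
  "hess_form f x \<xi> = frechet_derivative (\<lambda>y. frechet_derivative f (at y) \<xi>) (at x) \<xi>"

definition smooth_boundary :: "'a::euclidean_space set \<Rightarrow> bool" where
  "smooth_boundary \<Omega> \<longleftrightarrow>
     (\<forall>p\<in>frontier \<Omega>. \<exists>U \<rho>. open U \<and> p \<in> U \<and> smooth_on U \<rho> \<and>
        (\<forall>x\<in>U. grad \<rho> x \<noteq> 0) \<and> \<Omega> \<inter> U = {x\<in>U. \<rho> x < 0})"

definition outer_normal :: "'a::euclidean_space set \<Rightarrow> 'a \<Rightarrow> 'a \<Rightarrow> bool" where
  "outer_normal \<Omega> p \<nu> \<longleftrightarrow>
     (\<exists>U \<rho>. open U \<and> p \<in> U \<and> smooth_on U \<rho> \<and>
        (\<forall>x\<in>U. grad \<rho> x \<noteq> 0) \<and> \<Omega> \<inter> U = {x\<in>U. \<rho> x < 0} \<and>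
        \<nu> = (1 / norm (grad \<rho> p)) *\<^sub>R grad \<rho> p)"

text \<open>The operator E (= F, G or H according to the sign of s); q stands for <X xi, xi>.\<close>
definition Eop :: "real \<Rightarrow> real \<Rightarrow> 'a::euclidean_space \<Rightarrow> real \<Rightarrow> real" where
  "Eop \<Lambda> s \<xi> q =
     (if s > 0 then min (norm \<xi> - \<Lambda> * \<bar>s\<bar>) (- q)
      else if s < 0 then max (\<Lambda> * \<bar>s\<bar> - norm \<xi>) (- q)
      else - q)"

text \<open>C^2 test functions on closure Omega: C^2 on an open neighbourhood of the closure.\<close>
definition visc_sub :: "real \<Rightarrow> 'a::euclidean_space set \<Rightarrow> ('a \<Rightarrow> real) \<Rightarrow> bool" where
  "visc_sub \<Lambda> \<Omega> u \<longleftrightarrow>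
    (\<forall>x0\<in>\<Omega>. \<forall>\<phi>. Ck 2 \<Omega> \<phi> \<and> \<phi> x0 = u x0 \<and> (\<forall>x\<in>\<Omega>. x \<noteq> x0 \<longrightarrow> u x < \<phi> x)
        \<longrightarrow> Eop \<Lambda> (\<phi> x0) (grad \<phi> x0) (hess_form \<phi> x0 (grad \<phi> x0)) \<le> 0) \<and>
    (\<forall>x0\<in>frontier \<Omega>. \<forall>\<phi> V. open V \<and> closure \<Omega> \<subseteq> V \<and> Ck 2 V \<phi> \<and> \<phi> x0 = u x0 \<and>
        (\<forall>x\<in>closure \<Omega>. x \<noteq> x0 \<longrightarrow> u x < \<phi> x)
        \<longrightarrow> (\<forall>\<nu>. outer_normal \<Omega> x0 \<nu> \<longrightarrow>
              min (Eop \<Lambda> (\<phi> x0) (grad \<phi> x0) (hess_form \<phi> x0 (grad \<phi> x0)))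
                  (grad \<phi> x0 \<bullet> \<nu>) \<le> 0))"

definition visc_super :: "real \<Rightarrow> 'a::euclidean_space set \<Rightarrow> ('a \<Rightarrow> real) \<Rightarrow> bool" where
  "visc_super \<Lambda> \<Omega> u \<longleftrightarrow>
    (\<forall>x0\<in>\<Omega>. \<forall>\<phi>. Ck 2 \<Omega> \<phi> \<and> \<phi> x0 = u x0 \<and> (\<forall>x\<in>\<Omega>. x \<noteq> x0 \<longrightarrow> u x > \<phi> x)
        \<longrightarrow> Eop \<Lambda> (\<phi> x0) (grad \<phi> x0) (hess_form \<phi> x0 (grad \<phi> x0)) \<ge> 0) \<and>
    (\<forall>x0\<in>frontier \<Omega>. \<forall>\<phi> V. open V \<and> closure \<Omega> \<subseteq> V \<and> Ck 2 V \<phi> \<and> \<phi> x0 = u x0 \<and>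
        (\<forall>x\<in>closure \<Omega>. x \<noteq> x0 \<longrightarrow> u x > \<phi> x)
        \<longrightarrow> (\<forall>\<nu>. outer_normal \<Omega> x0 \<nu> \<longrightarrow>
              max (Eop \<Lambda> (\<phi> x0) (grad \<phi> x0) (hess_form \<phi> x0 (grad \<phi> x0)))
                  (grad \<phi> x0 \<bullet> \<nu>) \<ge> 0))"

definition visc_solution :: "real \<Rightarrow> 'a::euclidean_space set \<Rightarrow> ('a \<Rightarrow> real) \<Rightarrow> bool" where
  "visc_solution \<Lambda> \<Omega> u \<longleftrightarrow>
     continuous_on (closure \<Omega>) u \<and> visc_sub \<Lambda> \<Omega> u \<and> visc_super \<Lambda> \<Omega> u"

end

theory Submission
  imports Defs
begin

(* Suppose u is a viscosity subsolution with u <= 0 on the closure of Omega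
   and u(y) < 0 at some y in Omega.  Maximise u + eps*exp(-k|x-y|^2) over the compact
   closure; at a maximum point x1 the function
       phi(x) = const + beta*|x - x1|^2 - eps*exp(-k|x-y|^2)
   touches u strictly from above.  With k = 1/r^2 (r a continuity radius of u at y)
   the operator E is positive at x1: close to y the gradient of phi is small compared
   with Lambda*|u(x1)|, far from y the Gaussian is concave in the gradient direction.
   If x1 is a boundary point, convexity of Omega makes the normal derivative of phi
   positive.  Either way the subsolution inequality fails, so such a u vanishes.
   The problem is odd (E(-s,-xi,-q) = -E(s,xi,q)), so -u is a subsolution whenever u is
   a supersolution; applying the vanishing result to u and to -u yields the theorem. *)

lemma frechet_derivative_cong_open:
  assumes "open U" "x \<in> U" "\<And>y. y \<in> U \<Longrightarrow> f y = g y"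
  shows "frechet_derivative f (at x) = frechet_derivative g (at x)"
proof -
  have "(f has_derivative D) (at x) \<longleftrightarrow> (g has_derivative D) (at x)" for D
    using has_derivative_transform_within_open[of f D x UNIV U g]
          has_derivative_transform_within_open[of g D x UNIV U f] assms by auto
  then show ?thesis unfolding frechet_derivative_def by simp
qed

lemma differentiable_cong_open:
  assumes "open U" "x \<in> U" "\<And>y. y \<in> U \<Longrightarrow> f y = g y" "f differentiable (at x)"
  shows "g differentiable (at x)"
  using assms has_derivative_transform_within_open[of f _ x UNIV U g]
  unfolding differentiable_def by blast

lemma Ck_cong:
  assumes "open U" "Ck k U f" "\<And>x. x \<in> U \<Longrightarrow> f x = g x"
  shows "Ck k U g"
  using assms(2,3)
proof (induction k arbitrary: f g)
  case 0
  then show ?case using continuous_on_cong by force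
next
  case (Suc k)
  have "g differentiable (at x)" if "x \<in> U" for x
  proof (rule differentiable_cong_open[OF assms(1) that])
    show "f y = g y" if "y \<in> U" for y using Suc.prems(2) that .
    show "f differentiable (at x)"
      using Suc.prems(1) assms(1) that by (simp add: differentiable_on_eq_differentiable_at)
  qed
  moreover have "Ck k U (\<lambda>x. frechet_derivative g (at x) b)" if "b \<in> Basis" for b
  proof (rule Suc.IH)
    show "Ck k U (\<lambda>x. frechet_derivative f (at x) b)" using Suc.prems(1) that by simp
    show "frechet_derivative f (at x) b = frechet_derivative g (at x) b" if "x \<in> U" for x
      using frechet_derivative_cong_open[OF assms(1) that Suc.prems(2)] by simp
  qed
  ultimately show ?case using assms(1) by (simp add: differentiable_on_eq_differentiable_at)
qed

lemma Ck_mono: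
  assumes "Ck k U f" "V \<subseteq> U"
  shows "Ck k V f"
  using assms(1)
proof (induction k arbitrary: f)
  case 0
  then show ?case using continuous_on_subset[OF _ assms(2)] by simp
next
  case (Suc k)
  then have "f differentiable_on U" "\<forall>b\<in>Basis. Ck k U (\<lambda>x. frechet_derivative f (at x) b)"
    by simp_all
  then show ?case using Suc.IH differentiable_on_subset[OF _ assms(2)] by simp
qed

lemma frechet_derivative_uminus:
  assumes "f differentiable (at x)"
  shows "frechet_derivative (\<lambda>y. - f y) (at x) = (\<lambda>h. - frechet_derivative f (at x) h)"
  using has_derivative_minus[OF frechet_derivative_works[THEN iffD1, OF assms]]
  by (rule frechet_derivative_at[symmetric])

lemma Ck_uminus:
  assumes "open U" "Ck k U f"
  shows "Ck k U (\<lambda>x. - f x)"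
  using assms(2)
proof (induction k arbitrary: f)
  case 0
  then show ?case by (simp add: continuous_on_minus)
next
  case (Suc k)
  then have diff: "f differentiable (at x)" if "x \<in> U" for x
    using assms(1) that by (simp add: differentiable_on_eq_differentiable_at)
  have "Ck k U (\<lambda>x. frechet_derivative (\<lambda>y. - f y) (at x) b)" if "b \<in> Basis" for b
  proof (rule Ck_cong[OF assms(1)])
    show "Ck k U (\<lambda>x. - frechet_derivative f (at x) b)" using Suc that by simp
    show "- frechet_derivative f (at x) b = frechet_derivative (\<lambda>y. - f y) (at x) b" if "x \<in> U" for x
      by (simp add: frechet_derivative_uminus[OF diff[OF that]])
  qed
  with Suc show ?case by (simp add: differentiable_on_minus)
qed

lemma Ck2_differentiable:
  assumes "open U" "Ck 2 U f" "x \<in> U"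
  shows "f differentiable (at x)" and "(\<lambda>y. frechet_derivative f (at y) \<xi>) differentiable (at x)"
proof -
  have diffU: "f differentiable_on U"
    and diff1: "\<And>b. b \<in> Basis \<Longrightarrow> (\<lambda>y. frechet_derivative f (at y) b) differentiable_on U"
    using assms(2) by (simp_all add: numeral_2_eq_2)
  show "f differentiable (at x)"
    using diffU assms(1,3) by (simp add: differentiable_on_eq_differentiable_at)
  have repr: "(\<Sum>b\<in>Basis. (\<xi> \<bullet> b) * frechet_derivative f (at y) b) = frechet_derivative f (at y) \<xi>"
    if "y \<in> U" for y
  proof -
    have "linear (frechet_derivative f (at y))"
      using diffU assms(1) that by (intro linear_frechet_derivative) (simp add: differentiable_on_eq_differentiable_at)
    from Linear_Algebra.linear_componentwise[OF this, of \<xi> 1] show ?thesis by simp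
  qed
  have "(\<lambda>y. frechet_derivative f (at y) b) differentiable (at x)" if "b \<in> Basis" for b
    using diff1[OF that] assms(1,3) by (simp add: differentiable_on_eq_differentiable_at)
  then have "\<forall>b\<in>Basis. (\<lambda>y. (\<xi> \<bullet> b) * frechet_derivative f (at y) b) differentiable (at x)"
    using differentiable_mult[OF differentiable_const] by blast
  then have sum_diff: "(\<lambda>y. \<Sum>b\<in>Basis. (\<xi> \<bullet> b) * frechet_derivative f (at y) b) differentiable (at x)"
    by (rule differentiable_sum[OF finite_Basis])
  show "(\<lambda>y. frechet_derivative f (at y) \<xi>) differentiable (at x)"
    by (rule differentiable_cong_open[OF assms(1,3) _ sum_diff]) (rule repr)
qed

lemma grad_uminus:
  assumes "f differentiable (at x)"
  shows "grad (\<lambda>y. - f y) x = - grad f x"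
  unfolding grad_def frechet_derivative_uminus[OF assms] by (simp add: sum_negf)

lemma hess_form_uminus:
  assumes "open U" "Ck 2 U f" "x \<in> U"
  shows "hess_form (\<lambda>y. - f y) x (- \<xi>) = - hess_form f x \<xi>"
proof -
  let ?g = "\<lambda>y. frechet_derivative f (at y) \<xi>"
  have eq: "frechet_derivative (\<lambda>z. - f z) (at y) (- \<xi>) = ?g y" if "y \<in> U" for y
  proof -
    have diff: "f differentiable (at y)" using Ck2_differentiable(1)[OF assms(1,2) that] .
    have "frechet_derivative f (at y) (- \<xi>) = - ?g y"
      using linear_neg[OF linear_frechet_derivative[OF diff]] by simp
    then show ?thesis by (simp add: frechet_derivative_uminus[OF diff])
  qed
  have "hess_form (\<lambda>y. - f y) x (- \<xi>) = frechet_derivative ?g (at x) (- \<xi>)"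
  proof -
    have "frechet_derivative (\<lambda>y. frechet_derivative (\<lambda>z. - f z) (at y) (- \<xi>)) (at x)
          = frechet_derivative ?g (at x)"
      by (rule frechet_derivative_cong_open[OF assms(1,3)]) (rule eq)
    then show ?thesis unfolding hess_form_def by simp
  qed
  also have "\<dots> = - hess_form f x \<xi>"
    unfolding hess_form_def by (rule linear_neg[OF linear_frechet_derivative[OF Ck2_differentiable(2)[OF assms]]])
  finally show ?thesis .
qed

lemma grad_inner:
  fixes \<rho> :: "'a::euclidean_space \<Rightarrow> real"
  assumes "(\<rho> has_derivative D) (at x)"
  shows "grad \<rho> x \<bullet> h = D h"
proof -
  have "linear D" using assms has_derivative_linear by blast
  from Linear_Algebra.linear_componentwise[OF this, of h 1]
  have "D h = (\<Sum>b\<in>Basis. (h \<bullet> b) * D b)" by simp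
  also have "\<dots> = grad \<rho> x \<bullet> h"
    unfolding grad_def frechet_derivative_at[OF assms, symmetric]
    by (simp add: inner_sum_right inner_commute mult.commute)
  finally show ?thesis by simp
qed

(* The operator E is odd in all its arguments: problem (N_Lambda) is invariant under u -> -u. *)
lemma Eop_uminus: "Eop \<Lambda> (- s) (- \<xi>) (- q) = - Eop \<Lambda> s \<xi> q"
  unfolding Eop_def by (simp add: max_def min_def)

lemma Eop_test_uminus:
  assumes "open U" "Ck 2 U \<phi>" "x \<in> U"
  shows "Eop \<Lambda> (- \<phi> x) (grad (\<lambda>y. - \<phi> y) x) (hess_form (\<lambda>y. - \<phi> y) x (grad (\<lambda>y. - \<phi> y) x))
           = - Eop \<Lambda> (\<phi> x) (grad \<phi> x) (hess_form \<phi> x (grad \<phi> x))"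
  unfolding grad_uminus[OF Ck2_differentiable(1)[OF assms]] hess_form_uminus[OF assms]
  by (rule Eop_uminus)

lemma visc_superD_interior:
  assumes "visc_super \<Lambda> \<Omega> u" "x0 \<in> \<Omega>" "Ck 2 \<Omega> \<phi>" "\<phi> x0 = u x0"
    and "\<And>x. x \<in> \<Omega> \<Longrightarrow> x \<noteq> x0 \<Longrightarrow> \<phi> x < u x"
  shows "Eop \<Lambda> (\<phi> x0) (grad \<phi> x0) (hess_form \<phi> x0 (grad \<phi> x0)) \<ge> 0"
  using assms(1) unfolding visc_super_def using assms(2-) by simp

lemma visc_superD_boundary:
  assumes "visc_super \<Lambda> \<Omega> u" "x0 \<in> frontier \<Omega>" "outer_normal \<Omega> x0 \<nu>"
    and "open V" "closure \<Omega> \<subseteq> V" "Ck 2 V \<phi>" "\<phi> x0 = u x0"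
    and "\<And>x. x \<in> closure \<Omega> \<Longrightarrow> x \<noteq> x0 \<Longrightarrow> \<phi> x < u x"
  shows "max (Eop \<Lambda> (\<phi> x0) (grad \<phi> x0) (hess_form \<phi> x0 (grad \<phi> x0))) (grad \<phi> x0 \<bullet> \<nu>) \<ge> 0"
proof -
  have "\<forall>x0\<in>frontier \<Omega>. \<forall>\<phi> V. open V \<and> closure \<Omega> \<subseteq> V \<and> Ck 2 V \<phi> \<and> \<phi> x0 = u x0 \<and>
          (\<forall>x\<in>closure \<Omega>. x \<noteq> x0 \<longrightarrow> \<phi> x < u x) \<longrightarrow>
          (\<forall>\<nu>. outer_normal \<Omega> x0 \<nu> \<longrightarrow>
             max (Eop \<Lambda> (\<phi> x0) (grad \<phi> x0) (hess_form \<phi> x0 (grad \<phi> x0))) (grad \<phi> x0 \<bullet> \<nu>) \<ge> 0)"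
    using assms(1) unfolding visc_super_def by (rule conjunct2)
  then show ?thesis using assms(2-) by blast
qed

lemma visc_subD_interior:
  assumes "visc_sub \<Lambda> \<Omega> u" "x0 \<in> \<Omega>" "Ck 2 \<Omega> \<phi>" "\<phi> x0 = u x0"
    and "\<And>x. x \<in> \<Omega> \<Longrightarrow> x \<noteq> x0 \<Longrightarrow> u x < \<phi> x"
  shows "Eop \<Lambda> (\<phi> x0) (grad \<phi> x0) (hess_form \<phi> x0 (grad \<phi> x0)) \<le> 0"
  using assms(1) unfolding visc_sub_def using assms(2-) by simp

lemma visc_subD_boundary:
  assumes "visc_sub \<Lambda> \<Omega> u" "x0 \<in> frontier \<Omega>" "outer_normal \<Omega> x0 \<nu>"
    and "open V" "closure \<Omega> \<subseteq> V" "Ck 2 V \<phi>" "\<phi> x0 = u x0"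
    and "\<And>x. x \<in> closure \<Omega> \<Longrightarrow> x \<noteq> x0 \<Longrightarrow> u x < \<phi> x"
  shows "min (Eop \<Lambda> (\<phi> x0) (grad \<phi> x0) (hess_form \<phi> x0 (grad \<phi> x0))) (grad \<phi> x0 \<bullet> \<nu>) \<le> 0"
proof -
  have "\<forall>x0\<in>frontier \<Omega>. \<forall>\<phi> V. open V \<and> closure \<Omega> \<subseteq> V \<and> Ck 2 V \<phi> \<and> \<phi> x0 = u x0 \<and>
          (\<forall>x\<in>closure \<Omega>. x \<noteq> x0 \<longrightarrow> u x < \<phi> x) \<longrightarrow>
          (\<forall>\<nu>. outer_normal \<Omega> x0 \<nu> \<longrightarrow>
             min (Eop \<Lambda> (\<phi> x0) (grad \<phi> x0) (hess_form \<phi> x0 (grad \<phi> x0))) (grad \<phi> x0 \<bullet> \<nu>) \<le> 0)"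
    using assms(1) unfolding visc_sub_def by (rule conjunct2)
  then show ?thesis using assms(2-) by blast
qed

lemma visc_super_uminus:
  assumes "open \<Omega>" "visc_super \<Lambda> \<Omega> u"
  shows "visc_sub \<Lambda> \<Omega> (\<lambda>x. - u x)"
  unfolding visc_sub_def
proof (intro conjI ballI allI impI)
  fix x0 \<phi>
  assume x0: "x0 \<in> \<Omega>" and \<phi>: "Ck 2 \<Omega> \<phi> \<and> \<phi> x0 = - u x0 \<and> (\<forall>x\<in>\<Omega>. x \<noteq> x0 \<longrightarrow> - u x < \<phi> x)"
  then have C: "Ck 2 \<Omega> \<phi>" by blast
  have "Eop \<Lambda> (- \<phi> x0) (grad (\<lambda>y. - \<phi> y) x0) (hess_form (\<lambda>y. - \<phi> y) x0 (grad (\<lambda>y. - \<phi> y) x0)) \<ge> 0"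
    using \<phi> by (intro visc_superD_interior[OF assms(2) x0, of "\<lambda>y. - \<phi> y"] Ck_uminus[OF assms(1) C]) auto
  then show "Eop \<Lambda> (\<phi> x0) (grad \<phi> x0) (hess_form \<phi> x0 (grad \<phi> x0)) \<le> 0"
    using Eop_test_uminus[OF assms(1) C x0, of \<Lambda>] by linarith
next
  fix x0 \<phi> V \<nu>
  assume x0: "x0 \<in> frontier \<Omega>" and \<nu>: "outer_normal \<Omega> x0 \<nu>"
    and \<phi>: "open V \<and> closure \<Omega> \<subseteq> V \<and> Ck 2 V \<phi> \<and> \<phi> x0 = - u x0 \<and>
            (\<forall>x\<in>closure \<Omega>. x \<noteq> x0 \<longrightarrow> - u x < \<phi> x)"
  then have V: "open V" "closure \<Omega> \<subseteq> V" and C: "Ck 2 V \<phi>" by blast+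
  have x0V: "x0 \<in> V" using x0 V(2) by (auto simp: frontier_def)
  have "max (Eop \<Lambda> (- \<phi> x0) (grad (\<lambda>y. - \<phi> y) x0) (hess_form (\<lambda>y. - \<phi> y) x0 (grad (\<lambda>y. - \<phi> y) x0)))
                 (grad (\<lambda>y. - \<phi> y) x0 \<bullet> \<nu>) \<ge> 0"
    using \<phi> by (intro visc_superD_boundary[OF assms(2) x0 \<nu> V, of "\<lambda>y. - \<phi> y"] Ck_uminus[OF V(1) C]) auto
  moreover have "grad (\<lambda>y. - \<phi> y) x0 = - grad \<phi> x0"
    by (rule grad_uminus[OF Ck2_differentiable(1)[OF V(1) C x0V]])
  ultimately show "min (Eop \<Lambda> (\<phi> x0) (grad \<phi> x0) (hess_form \<phi> x0 (grad \<phi> x0))) (grad \<phi> x0 \<bullet> \<nu>) \<le> 0"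
    using Eop_test_uminus[OF V(1) C x0V, of \<Lambda>] by (simp add: max_def min_def split: if_splits)
qed

lemma defining_function_derivative_nonpos:
  fixes \<Omega> :: "'a::euclidean_space set" and \<rho> :: "'a \<Rightarrow> real"
  assumes \<Omega>: "open \<Omega>" "convex \<Omega>" and x1: "x1 \<in> frontier \<Omega>"
    and U: "open U" "x1 \<in> U" "\<Omega> \<inter> U = {x\<in>U. \<rho> x < 0}"
    and D: "(\<rho> has_derivative D) (at x1)" and z: "z \<in> \<Omega>"
  shows "D (z - x1) \<le> 0"
proof (rule ccontr)
  define v where "v = z - x1"
  assume "\<not> D (z - x1) \<le> 0"
  then have pos: "D v > 0" unfolding v_def by simp
  have x1_out: "x1 \<notin> \<Omega>" using \<Omega>(1) x1 by (simp add: frontier_def interior_open)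
  then have "x1 \<notin> {x\<in>U. \<rho> x < 0}" using U(3) by blast
  then have "\<rho> x1 \<ge> 0" using U(2) by simp
  have line: "((\<lambda>t::real. x1 + t *\<^sub>R v) has_derivative (\<lambda>t. t *\<^sub>R v)) (at 0)"
    by (auto intro!: derivative_eq_intros)
  have "((\<lambda>t. \<rho> (x1 + t *\<^sub>R v)) has_derivative (\<lambda>t. D (t *\<^sub>R v))) (at 0)"
    using has_derivative_compose[OF line] D by (simp add: o_def)
  moreover have "(\<lambda>t. D (t *\<^sub>R v)) = (*) (D v)"
    using linear_scale[OF has_derivative_linear[OF D]] by (auto simp: mult.commute)
  ultimately have "((\<lambda>t. \<rho> (x1 + t *\<^sub>R v)) has_real_derivative D v) (at 0)"
    by (simp add: has_field_derivative_def)
  \<comment> \<open>If D v > 0, then \<rho> increases along the segment from x1 towards z, although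
      points of that segment close to x1 lie in \<Omega> \<inter> U where \<rho> < 0.\<close>
  from DERIV_pos_inc_right[OF this pos] obtain d where d: "d > 0"
    "\<And>h. 0 < h \<Longrightarrow> h < d \<Longrightarrow> \<rho> x1 < \<rho> (x1 + h *\<^sub>R v)" by auto
  have "((\<lambda>t. x1 + t *\<^sub>R v) \<longlongrightarrow> x1) (at_right 0)"
    by (auto intro!: tendsto_eq_intros)
  then have "eventually (\<lambda>t. x1 + t *\<^sub>R v \<in> U) (at_right 0)"
    using U(1,2) by (rule topological_tendstoD)
  moreover have "eventually (\<lambda>t. 0 < t \<and> t < min d 1) (at_right (0::real))"
    using d(1) by (auto simp: eventually_at_right intro!: exI[of _ "min d 1"])
  ultimately have "eventually (\<lambda>t. x1 + t *\<^sub>R v \<in> U \<and> 0 < t \<and> t < min d 1) (at_right 0)"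
    by (rule eventually_conj)
  then obtain t where t: "x1 + t *\<^sub>R v \<in> U" "0 < t" "t < d" "t < 1"
    using eventually_happens'[OF trivial_limit_at_right_real] by force
  have "open_segment z x1 \<subseteq> \<Omega>"
    using in_interior_closure_convex_segment[OF \<Omega>(2), of z x1] x1 z \<Omega>(1)
    by (simp add: interior_open frontier_def)
  moreover have "x1 + t *\<^sub>R v \<in> open_segment z x1"
  proof -
    have "x1 + t *\<^sub>R v = (1 - (1 - t)) *\<^sub>R z + (1 - t) *\<^sub>R x1"
      unfolding v_def by (simp add: algebra_simps)
    moreover have "z \<noteq> x1" using z x1_out by blast
    ultimately show ?thesis
      unfolding in_segment using t(2,4) by (intro conjI exI[of _ "1 - t"]) simp_all
  qed
  ultimately have "\<rho> (x1 + t *\<^sub>R v) < 0" using t(1) U(3) by blast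
  then show False using d(2)[OF t(2,3)] \<open>\<rho> x1 \<ge> 0\<close> by linarith
qed

lemma outer_normal_inner_pos:
  fixes \<Omega> :: "'a::euclidean_space set"
  assumes \<Omega>: "open \<Omega>" "convex \<Omega>" and x1: "x1 \<in> frontier \<Omega>"
    and \<nu>: "outer_normal \<Omega> x1 \<nu>" and y: "y \<in> \<Omega>"
  shows "(x1 - y) \<bullet> \<nu> > 0"
proof -
  obtain U \<rho> where U: "open U" "x1 \<in> U" "smooth_on U \<rho>" "\<forall>x\<in>U. grad \<rho> x \<noteq> 0"
      "\<Omega> \<inter> U = {x\<in>U. \<rho> x < 0}" and \<nu>_eq: "\<nu> = (1 / norm (grad \<rho> x1)) *\<^sub>R grad \<rho> x1"
    using \<nu> unfolding outer_normal_def by blast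
  define g where "g = grad \<rho> x1"
  have g0: "g \<noteq> 0" using U(2,4) unfolding g_def by blast
  have "Ck 1 U \<rho>" using U(3) unfolding smooth_on_def by blast
  then have "\<rho> differentiable (at x1)"
    using U(1,2) by (simp add: differentiable_on_eq_differentiable_at)
  then have D: "(\<rho> has_derivative frechet_derivative \<rho> (at x1)) (at x1)"
    by (rule frechet_derivative_works[THEN iffD1])
  have g_nonpos: "g \<bullet> (z - x1) \<le> 0" if "z \<in> \<Omega>" for z
    unfolding g_def grad_inner[OF D]
    by (rule defining_function_derivative_nonpos[OF \<Omega> x1 U(1,2,5) D that])
  obtain r where r: "r > 0" "ball y r \<subseteq> \<Omega>" using \<Omega>(1) y open_contains_ball by blast
  define z where "z = y + (r / 2 / norm g) *\<^sub>R g"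
  have "dist y z = r / 2" using g0 r(1) unfolding z_def by (simp add: dist_norm)
  then have "z \<in> \<Omega>" using r by auto
  have "g \<bullet> (z - x1) = g \<bullet> (y - x1) + (r / 2 / norm g) * (g \<bullet> g)"
    unfolding z_def by (simp add: algebra_simps inner_diff_right)
  also have "(r / 2 / norm g) * (g \<bullet> g) = r / 2 * norm g"
    using g0 by (simp add: power2_norm_eq_inner[symmetric] power2_eq_square)
  finally have "g \<bullet> (y - x1) + r / 2 * norm g \<le> 0"
    using g_nonpos[OF \<open>z \<in> \<Omega>\<close>] by simp
  moreover have "r / 2 * norm g > 0" using r(1) g0 by simp
  ultimately have "g \<bullet> (x1 - y) > 0"
    by (simp add: inner_diff_right)
  then show ?thesis
    unfolding \<nu>_eq g_def[symmetric] using g0 by (simp add: inner_commute)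
qed

lemma outer_normal_exists:
  assumes "smooth_boundary \<Omega>" "x1 \<in> frontier \<Omega>"
  obtains \<nu> where "outer_normal \<Omega> x1 \<nu>"
proof -
  obtain U \<rho> where "open U \<and> x1 \<in> U \<and> smooth_on U \<rho> \<and>
      (\<forall>x\<in>U. grad \<rho> x \<noteq> 0) \<and> \<Omega> \<inter> U = {x\<in>U. \<rho> x < 0}"
    using assms unfolding smooth_boundary_def by meson
  then have "outer_normal \<Omega> x1 ((1 / norm (grad \<rho> x1)) *\<^sub>R grad \<rho> x1)"
    unfolding outer_normal_def by blast
  then show ?thesis by (rule that)
qed

lemma visc_sub_touching_above:
  fixes \<Omega> :: "'a::euclidean_space set"
  assumes \<Omega>: "open \<Omega>" "smooth_boundary \<Omega>" and sub: "visc_sub \<Lambda> \<Omega> u"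
    and x1: "x1 \<in> closure \<Omega>" and \<phi>: "Ck 2 UNIV \<phi>" "\<phi> x1 = u x1"
    and above: "\<And>x. x \<in> closure \<Omega> \<Longrightarrow> x \<noteq> x1 \<Longrightarrow> u x < \<phi> x"
  obtains "Eop \<Lambda> (\<phi> x1) (grad \<phi> x1) (hess_form \<phi> x1 (grad \<phi> x1)) \<le> 0"
    | \<nu> where "x1 \<in> frontier \<Omega>" "outer_normal \<Omega> x1 \<nu>" "grad \<phi> x1 \<bullet> \<nu> \<le> 0"
proof (cases "x1 \<in> \<Omega>")
  case True
  have "Ck 2 \<Omega> \<phi>" using Ck_mono[OF \<phi>(1)] by blast
  moreover have "u x < \<phi> x" if "x \<in> \<Omega>" "x \<noteq> x1" for x
    using above that closure_subset by blast
  ultimately show ?thesis using visc_subD_interior[OF sub True, of \<phi>] \<phi>(2) that(1) by blast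
next
  case False
  then have fr: "x1 \<in> frontier \<Omega>" using x1 \<Omega>(1) by (simp add: frontier_def interior_open)
  obtain \<nu> where \<nu>: "outer_normal \<Omega> x1 \<nu>" using outer_normal_exists[OF \<Omega>(2) fr] .
  have "min (Eop \<Lambda> (\<phi> x1) (grad \<phi> x1) (hess_form \<phi> x1 (grad \<phi> x1))) (grad \<phi> x1 \<bullet> \<nu>) \<le> 0"
    using visc_subD_boundary[OF sub fr \<nu> open_UNIV subset_UNIV \<phi> above] by blast
  then show ?thesis using that fr \<nu> by (auto simp: min_le_iff_disj)
qed

lemma gaussian_test_function:
  fixes y x1 :: "'a::euclidean_space" and c \<beta> \<epsilon> k :: real
  defines "\<phi> \<equiv> \<lambda>x. c + \<beta> * ((x - x1) \<bullet> (x - x1)) - \<epsilon> * exp (- k * ((x - y) \<bullet> (x - y)))"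
  shows "Ck 2 S \<phi>"
    and "grad \<phi> x1 = (2 * \<epsilon> * k * exp (- k * ((x1 - y) \<bullet> (x1 - y)))) *\<^sub>R (x1 - y)"
    and "hess_form \<phi> x1 \<xi> = 2 * \<beta> * (\<xi> \<bullet> \<xi>)
           + 2 * \<epsilon> * k * exp (- k * ((x1 - y) \<bullet> (x1 - y))) * (\<xi> \<bullet> \<xi> - 2 * k * ((x1 - y) \<bullet> \<xi>)\<^sup>2)"
proof -
  let ?e = "\<lambda>x. exp (- k * ((x - y) \<bullet> (x - y)))"
  define \<phi>' where "\<phi>' x h = 2 * \<beta> * ((x - x1) \<bullet> h) + 2 * \<epsilon> * k * ?e x * ((x - y) \<bullet> h)" for x h
  define \<phi>'' where "\<phi>'' x b h = 2 * \<beta> * (h \<bullet> b) + 2 * \<epsilon> * k * ?e x * (h \<bullet> b - 2 * k * ((x - y) \<bullet> h) * ((x - y) \<bullet> b))"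
    for x b h
  have D1: "(\<phi> has_derivative \<phi>' x) (at x)" for x
    unfolding \<phi>_def \<phi>'_def
    by (auto intro!: derivative_eq_intros ext simp: algebra_simps inner_commute)
  have fd1: "(\<lambda>x. frechet_derivative \<phi> (at x) b) = (\<lambda>x. \<phi>' x b)" for b
    using frechet_derivative_at[OF D1] by metis
  have D2: "((\<lambda>x. \<phi>' x b) has_derivative \<phi>'' x b) (at x)" for x b
    unfolding \<phi>'_def \<phi>''_def
    by (auto intro!: derivative_eq_intros ext simp: algebra_simps inner_commute)
  have fd2: "frechet_derivative (\<lambda>x. frechet_derivative \<phi> (at x) b) (at x) = \<phi>'' x b" for x b
    unfolding fd1 using frechet_derivative_at[OF D2] by metis
  have "\<phi> differentiable_on S" "(\<lambda>x. frechet_derivative \<phi> (at x) b) differentiable_on S" for b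
    using D1 D2 unfolding fd1 differentiable_on_def differentiable_def
    by (blast intro: has_derivative_at_withinI)+
  moreover have "continuous_on S (\<lambda>x. frechet_derivative (\<lambda>x. frechet_derivative \<phi> (at x) b) (at x) b')"
    for b b'
    unfolding fd2 \<phi>''_def by (intro continuous_intros)
  ultimately show "Ck 2 S \<phi>" by (simp add: numeral_2_eq_2)
  have "grad \<phi> x1 = (\<Sum>b\<in>Basis. (((2 * \<epsilon> * k * ?e x1) *\<^sub>R (x1 - y)) \<bullet> b) *\<^sub>R b)"
    unfolding grad_def frechet_derivative_at[OF D1, symmetric] \<phi>'_def
    by (intro sum.cong refl) (simp add: algebra_simps)
  then show "grad \<phi> x1 = (2 * \<epsilon> * k * ?e x1) *\<^sub>R (x1 - y)"
    by (simp only: euclidean_representation)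
  show "hess_form \<phi> x1 \<xi> = 2 * \<beta> * (\<xi> \<bullet> \<xi>) + 2 * \<epsilon> * k * ?e x1 * (\<xi> \<bullet> \<xi> - 2 * k * ((x1 - y) \<bullet> \<xi>)\<^sup>2)"
    unfolding hess_form_def fd2 \<phi>''_def by (simp add: power2_eq_square)
qed

lemma gaussian_test_function_at_touch:
  fixes y x1 :: "'a::euclidean_space" and c \<epsilon> k :: real
  defines "a \<equiv> 2 * \<epsilon> * k * exp (- k * ((x1 - y) \<bullet> (x1 - y)))"
  defines "\<phi> \<equiv> \<lambda>x. c + a / 4 * ((x - x1) \<bullet> (x - x1)) - \<epsilon> * exp (- k * ((x - y) \<bullet> (x - y)))"
  shows "grad \<phi> x1 = a *\<^sub>R (x1 - y)"
    and "hess_form \<phi> x1 (a *\<^sub>R (x1 - y))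
           = a ^ 3 * ((x1 - y) \<bullet> (x1 - y)) * (3 / 2 - 2 * k * ((x1 - y) \<bullet> (x1 - y)))"
  unfolding \<phi>_def gaussian_test_function(2,3) a_def[symmetric]
  by (simp_all add: power2_eq_square power3_eq_cube algebra_simps)

lemma Eop_pos_at_nonpos_level:
  assumes "s \<le> 0" "q < 0 \<or> (s < 0 \<and> norm \<xi> < \<Lambda> * \<bar>s\<bar>)"
  shows "Eop \<Lambda> s \<xi> q > 0"
  using assms unfolding Eop_def by (auto simp: less_max_iff_disj)

(* The operator is positive at the touching point, in terms of d = x1 - y and the gradient
   a d of the test function: near y because |a d| < Lambda |s|, far from y because the
   Hessian form in the gradient direction is negative. *)
lemma gaussian_touch_Eop_pos:
  fixes d :: "'a::euclidean_space"
  assumes "\<Lambda> > 0" "\<mu> > 0" "r > 0" "s \<le> 0" and near: "norm d < r \<Longrightarrow> s < - \<mu>"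
  defines "k \<equiv> 1 / r\<^sup>2" and "\<epsilon> \<equiv> \<Lambda> * \<mu> * r / 2"
  defines "a \<equiv> 2 * \<epsilon> * k * exp (- k * (d \<bullet> d))"
  shows "Eop \<Lambda> s (a *\<^sub>R d) (a ^ 3 * (d \<bullet> d) * (3 / 2 - 2 * k * (d \<bullet> d))) > 0"
proof (rule Eop_pos_at_nonpos_level[OF assms(4)])
  have k: "k > 0" and \<epsilon>: "\<epsilon> > 0" and a: "a > 0"
    using assms(1-3) unfolding k_def \<epsilon>_def a_def by simp_all
  show "a ^ 3 * (d \<bullet> d) * (3 / 2 - 2 * k * (d \<bullet> d)) < 0 \<or> s < 0 \<and> norm (a *\<^sub>R d) < \<Lambda> * \<bar>s\<bar>"
  proof (cases "norm d < r")
    case True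
    then have s: "s < - \<mu>" by (rule near)
    have "exp (- k * (d \<bullet> d)) * norm d \<le> 1 * norm d"
      using k by (intro mult_right_mono) simp_all
    then have "norm (a *\<^sub>R d) \<le> 2 * \<epsilon> * k * norm d"
      using k \<epsilon> unfolding a_def by (simp add: mult.assoc)
    also have "\<dots> < 2 * \<epsilon> * k * r" using True k \<epsilon> by simp
    also have "2 * \<epsilon> * k * r = \<Lambda> * \<mu>"
      using assms(3) unfolding \<epsilon>_def k_def by (simp add: power2_eq_square field_simps)
    also have "\<dots> < \<Lambda> * \<bar>s\<bar>" using s assms(1,2) by (intro mult_strict_left_mono) simp_all
    finally show ?thesis using s assms(2) by simp
  next
    case False
    then have "r\<^sup>2 \<le> (norm d)\<^sup>2" using assms(3) by (intro power_mono) auto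
    then have t: "r\<^sup>2 \<le> d \<bullet> d" by (simp add: power2_norm_eq_inner)
    then have "k * (d \<bullet> d) \<ge> 1" using assms(3) unfolding k_def by (simp add: field_simps)
    moreover have "d \<bullet> d > 0" using t assms(3) by (smt (verit) zero_less_power)
    ultimately show ?thesis using a by (simp add: mult_pos_neg)
  qed
qed

lemma nonpositive_subsolution_nonneg:
  fixes \<Omega> :: "'a::euclidean_space set" and u :: "'a \<Rightarrow> real"
  assumes \<Omega>: "open \<Omega>" "bounded \<Omega>" "convex \<Omega>" "smooth_boundary \<Omega>" and \<Lambda>: "\<Lambda> > 0"
    and sub: "visc_sub \<Lambda> \<Omega> u" and cont: "continuous_on (closure \<Omega>) u"
    and nonpos: "\<And>x. x \<in> closure \<Omega> \<Longrightarrow> u x \<le> 0" and y: "y \<in> \<Omega>"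
  shows "u y \<ge> 0"
proof (rule ccontr)
  assume "\<not> u y \<ge> 0"
  define \<mu> where "\<mu> = - u y / 2"
  have \<mu>: "\<mu> > 0" using \<open>\<not> u y \<ge> 0\<close> unfolding \<mu>_def by simp
  have y_cl: "y \<in> closure \<Omega>" using y closure_subset by blast
  obtain r where r: "r > 0" and near_y: "\<And>x. x \<in> closure \<Omega> \<Longrightarrow> dist x y < r \<Longrightarrow> dist (u x) (u y) < \<mu>"
    using cont y_cl \<mu> unfolding continuous_on_iff by meson
  define k where "k = 1 / r\<^sup>2"
  define \<epsilon> where "\<epsilon> = \<Lambda> * \<mu> * r / 2"
  define bump where "bump x = \<epsilon> * exp (- k * ((x - y) \<bullet> (x - y)))" for x
  \<comment> \<open>The maximum point of u + bump over the compact set closure \<Omega> is the touching point.\<close>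
  have "continuous_on (closure \<Omega>) (\<lambda>x. u x + bump x)"
    unfolding bump_def by (intro continuous_intros cont)
  moreover have "compact (closure \<Omega>)" "closure \<Omega> \<noteq> {}"
    using \<Omega>(2) y_cl by (auto simp: compact_closure)
  ultimately obtain x1 where x1: "x1 \<in> closure \<Omega>"
    and max: "\<And>x. x \<in> closure \<Omega> \<Longrightarrow> u x + bump x \<le> u x1 + bump x1"
    using continuous_attains_sup[of "closure \<Omega>" "\<lambda>x. u x + bump x"] by blast
  define d where "d = x1 - y"
  define a where "a = 2 * \<epsilon> * k * exp (- k * (d \<bullet> d))"
  define \<phi> where "\<phi> x = (u x1 + bump x1) + a / 4 * ((x - x1) \<bullet> (x - x1)) - bump x" for x
  have a: "a > 0" using \<Lambda> \<mu> r unfolding a_def \<epsilon>_def k_def by simp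
  have \<phi>_eq: "\<phi> = (\<lambda>x. (u x1 + bump x1) + a / 4 * ((x - x1) \<bullet> (x - x1))
                        - \<epsilon> * exp (- k * ((x - y) \<bullet> (x - y))))"
    unfolding \<phi>_def bump_def by simp
  have C2: "Ck 2 UNIV \<phi>" unfolding \<phi>_eq by (rule gaussian_test_function(1))
  have grad: "grad \<phi> x1 = a *\<^sub>R d"
    and hess: "hess_form \<phi> x1 (a *\<^sub>R d) = a ^ 3 * (d \<bullet> d) * (3 / 2 - 2 * k * (d \<bullet> d))"
    unfolding \<phi>_eq a_def d_def by (rule gaussian_test_function_at_touch)+
  have touch: "\<phi> x1 = u x1" unfolding \<phi>_def by simp
  have above: "u x < \<phi> x" if "x \<in> closure \<Omega>" "x \<noteq> x1" for x
  proof -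
    have "a / 4 * ((x - x1) \<bullet> (x - x1)) > 0" using a that(2) by simp
    then show ?thesis using max[OF that(1)] unfolding \<phi>_def by linarith
  qed
  \<comment> \<open>Near y the gradient is small compared to \<Lambda> |u|; far from y the test function is concave
      in the gradient direction.  Either way the operator is positive at x1.\<close>
  have "Eop \<Lambda> (u x1) (a *\<^sub>R d) (a ^ 3 * (d \<bullet> d) * (3 / 2 - 2 * k * (d \<bullet> d))) > 0"
    unfolding a_def k_def \<epsilon>_def
  proof (rule gaussian_touch_Eop_pos[OF \<Lambda> \<mu> r nonpos[OF x1]])
    assume "norm d < r"
    then have "dist (u x1) (u y) < \<mu>" using near_y[OF x1] unfolding d_def by (simp add: dist_norm)
    then show "u x1 < - \<mu>" unfolding \<mu>_def dist_real_def by linarith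
  qed
  then have E: "Eop \<Lambda> (\<phi> x1) (grad \<phi> x1) (hess_form \<phi> x1 (grad \<phi> x1)) > 0"
    unfolding touch grad hess .
  show False
  proof (rule visc_sub_touching_above[OF \<Omega>(1,4) sub x1 C2 touch above])
    show "Eop \<Lambda> (\<phi> x1) (grad \<phi> x1) (hess_form \<phi> x1 (grad \<phi> x1)) \<le> 0 \<Longrightarrow> False"
      using E by linarith
  next
    fix \<nu> assume "x1 \<in> frontier \<Omega>" "outer_normal \<Omega> x1 \<nu>" "grad \<phi> x1 \<bullet> \<nu> \<le> 0"
    moreover have "d \<bullet> \<nu> > 0"
      unfolding d_def by (rule outer_normal_inner_pos[OF \<Omega>(1,3) \<open>x1 \<in> frontier \<Omega>\<close> \<open>outer_normal \<Omega> x1 \<nu>\<close> y])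
    ultimately show False using a unfolding grad by (simp add: mult_le_0_iff)
  qed
qed

lemma nonpositive_subsolution_vanishes:
  fixes \<Omega> :: "'a::euclidean_space set" and u :: "'a \<Rightarrow> real"
  assumes \<Omega>: "open \<Omega>" "bounded \<Omega>" "convex \<Omega>" "smooth_boundary \<Omega>" and \<Lambda>: "\<Lambda> > 0"
    and sub: "visc_sub \<Lambda> \<Omega> u" and cont: "continuous_on (closure \<Omega>) u"
    and nonpos: "\<forall>x\<in>\<Omega>. u x \<le> 0"
  shows "\<forall>x\<in>closure \<Omega>. u x = 0"
proof -
  have "u x \<le> 0" if "x \<in> closure \<Omega>" for x
    using continuous_le_on_closure[OF cont that] nonpos by blast
  then have "u x = 0" if "x \<in> \<Omega>" for x
    using nonpositive_subsolution_nonneg[OF \<Omega> \<Lambda> sub cont _ that] nonpos that by force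
  then show ?thesis using continuous_constant_on_closure[OF cont] by blast
qed

theorem lemma4:
  fixes \<Omega> :: "'a::euclidean_space set" and u :: "'a \<Rightarrow> real" and \<Lambda> :: real
  assumes "open \<Omega>" and "bounded \<Omega>" and "convex \<Omega>" and "smooth_boundary \<Omega>"
    and "\<Lambda> > 0"
    and "visc_solution \<Lambda> \<Omega> u"
    and "\<not> (\<exists>c. \<forall>x\<in>closure \<Omega>. u x = c)"
  shows "(\<exists>x\<in>\<Omega>. u x > 0) \<and> (\<exists>x\<in>\<Omega>. u x < 0)"
proof
  have cont: "continuous_on (closure \<Omega>) u" and sub: "visc_sub \<Lambda> \<Omega> u"
    and super: "visc_super \<Lambda> \<Omega> u"
    using assms(6) unfolding visc_solution_def by auto
  show "\<exists>x\<in>\<Omega>. u x > 0"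
  proof (rule ccontr)
    assume "\<not> (\<exists>x\<in>\<Omega>. u x > 0)"
    then have "\<forall>x\<in>closure \<Omega>. u x = 0"
      using nonpositive_subsolution_vanishes[OF assms(1-5) sub cont] by (simp add: not_less)
    then show False using assms(7) by blast
  qed
  have sub_neg: "visc_sub \<Lambda> \<Omega> (\<lambda>x. - u x)"
    by (rule visc_super_uminus[OF assms(1) super])
  have cont_neg: "continuous_on (closure \<Omega>) (\<lambda>x. - u x)"
    using cont by (rule continuous_on_minus)
  show "\<exists>x\<in>\<Omega>. u x < 0"
  proof (rule ccontr)
    assume "\<not> (\<exists>x\<in>\<Omega>. u x < 0)"
    then have "\<forall>x\<in>closure \<Omega>. - u x = 0"
      using nonpositive_subsolution_vanishes[OF assms(1-5) sub_neg cont_neg] by (simp add: not_less)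
    then show False using assms(7) by force
  qed
qed

end
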